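(* Let $S(t)$ be the semigroup on $\boldsymbol L^2_\sigma(\Gamma)$ generated by (NS) under (C1)–(C2), and let $\mathcal J$ and $\mathcal I$ be as defined in the context. Then: (A) $\mathcal J$ is invariant: $S(t)\mathcal J=\mathcal J$ for all $t\ge0$. (B) If a closed set $\mathcal D\subset\boldsymbol L^2_\sigma(\Gamma)$ attracts all bounded sets, i.e. $\lim_{t\to\infty}{\rm dist}(S(t)B,\mathcal D)=0$ for every bounded $B\subset\boldsymbol L^2_\sigma(\Gamma)$, then $\mathcal J\subset\mathcal D$. (C) If $A\subset\boldsymbol L^2_\sigma(\Gamma)$ is a nonempty bounded invariant set, then $A\subset\mathcal I\subset\mathcal J$; in particular $\mathcal J\neq\emptyset$.
   Context: $\Gamma\subset\mathbb R^3$ is a smooth, compact, connected, embedded two-dimensional surface without boundary; $\|\cdot\|$ is the norm of $\boldsymbol L^2(\Gamma)$ (tangential fields), $\boldsymbol L^2_\sigma(\Gamma)=\{\boldsymbol v\in\boldsymbol L^2(\Gamma):{\rm div}_\Gamma\boldsymbol v=0\}$. (NS) is the tangential surface Navier–Stokes problem $\partial_t\boldsymbol u+(\boldsymbol u\cdot\nabla_\Gamma)\boldsymbol u-2\mathbf P_\Gamma{\rm div}_\Gamma(\nu\boldsymbol\varepsilon_\Gamma(\boldsymbol u))+\nabla_\Gamma p=\boldsymbol f(\cdot,\boldsymbol u)$, ${\rm div}_\Gamma\boldsymbol u=0$, $\boldsymbol u(0)=\boldsymbol u_0$, with $\nu\in W^{1,\infty}(\Gamma)$, $\nu\ge\nu_*>0$,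 and Carathéodory $\boldsymbol f$ satisfying (C1) $\|\boldsymbol f(\cdot,\boldsymbol 0)\|\le C_1$, (C2) $\|\boldsymbol f(\cdot,\boldsymbol v_1)-\boldsymbol f(\cdot,\boldsymbol v_2)\|\le C_2\|\boldsymbol v_1-\boldsymbol v_2\|$; $S(t)\boldsymbol u_0$ is the value at time $t$ of its unique global weak solution, a continuous semigroup on $\boldsymbol L^2_\sigma(\Gamma)$. ${\rm dist}(A,B)=\sup_{a\in A}\inf_{b\in B}\|a-b\|$; a set is invariant if $S(t)A=A$ for all $t\ge0$. A complete trajectory is a map $\xi:\mathbb R\to\boldsymbol L^2_\sigma(\Gamma)$ with $S(t)\xi(s)=\xi(t+s)$ for all $t\ge0$, $s\in\mathbb R$; it is bounded-in-the-past if $\xi((-\infty,0])$ is bounded, bounded if $\xi(\mathbb R)$ is bounded. $\mathcal J:=\{\xi(0):\xi$ a bounded-in-the-past complete trajectory$\}$ and $\mathcal I:=\{\xi(0):\xi$ a bounded complete trajectory$\}$. *)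

theory Defs
  imports "HOL-Analysis.Analysis" "HOL-Library.Extended_Real"
begin

text \<open>Abstract setting: the phase space L2_sigma(Gamma) is modelled by a real Hilbert
space type 'a; S t x is the value at time t of the solution starting at x.\<close>

definition semigroup :: "(real \<Rightarrow> 'a \<Rightarrow> 'a) \<Rightarrow> bool" where
  "semigroup S \<longleftrightarrow> (\<forall>x. S 0 x = x) \<and>
     (\<forall>t s x. t \<ge> 0 \<longrightarrow> s \<ge> 0 \<longrightarrow> S (t + s) x = S t (S s x))"

definition continuous_semigroup :: "(real \<Rightarrow> 'a::topological_space \<Rightarrow> 'a) \<Rightarrow> bool" where
  "continuous_semigroup S \<longleftrightarrow> semigroup S \<and>
     (\<forall>t\<ge>0. continuous_on UNIV (S t)) \<and> (\<forall>x. continuous_on {0..} (\<lambda>t. S t x))"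

definition complete_trajectory :: "(real \<Rightarrow> 'a \<Rightarrow> 'a) \<Rightarrow> (real \<Rightarrow> 'a) \<Rightarrow> bool" where
  "complete_trajectory S \<xi> \<longleftrightarrow> (\<forall>t s. t \<ge> 0 \<longrightarrow> S t (\<xi> s) = \<xi> (t + s))"

definition J_set :: "(real \<Rightarrow> 'a::metric_space \<Rightarrow> 'a) \<Rightarrow> 'a set" where
  "J_set S = {\<xi> 0 | \<xi>. complete_trajectory S \<xi> \<and> bounded (\<xi> ` {..0})}"

definition I_set :: "(real \<Rightarrow> 'a::metric_space \<Rightarrow> 'a) \<Rightarrow> 'a set" where
  "I_set S = {\<xi> 0 | \<xi>. complete_trajectory S \<xi> \<and> bounded (range \<xi>)}"

text \<open>Hausdorff semidistance dist(A,B) = sup_{a in A} inf_{b in B} |a-b|, valued in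
extended reals (inf over empty B is +infinity; sup over empty A is 0).\<close>

definition semidist :: "'a::metric_space set \<Rightarrow> 'a set \<Rightarrow> ereal" where
  "semidist A B = Sup (insert 0 ((\<lambda>a. Inf ((\<lambda>b. ereal (dist a b)) ` B)) ` A))"

definition invariant_set :: "(real \<Rightarrow> 'a \<Rightarrow> 'a) \<Rightarrow> 'a set \<Rightarrow> bool" where
  "invariant_set S A \<longleftrightarrow> (\<forall>t\<ge>0. S t ` A = A)"

end

theory Submission
  imports Defs
begin

text \<open>Translating a complete trajectory in time shows that \<open>\<J>\<close> is invariant, and since
every point of \<open>\<J>\<close> lies in \<open>S t\<close> of the bounded past of its trajectory, it lies within
the semidistance of that bounded set to any attractor \<open>D\<close>, hence in the closed set \<open>D\<close>.
Conversely, invariance of a set \<open>A\<close> lets one pick a backward orbit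
\<open>x = x\<^sub>0, x\<^sub>1, \<dots>\<close> in \<open>A\<close> with \<open>S 1 x\<^sub>n\<^sub>+\<^sub>1 = x\<^sub>n\<close>; running the semigroup forward
from these points glues into a complete trajectory through \<open>x\<close> that stays in \<open>A\<close>.\<close>

lemma semigroup_zero [simp]: "semigroup S \<Longrightarrow> S 0 x = x"
  by (simp add: semigroup_def)

lemma semigroup_add: "semigroup S \<Longrightarrow> t \<ge> 0 \<Longrightarrow> s \<ge> 0 \<Longrightarrow> S (t + s) x = S t (S s x)"
  by (simp add: semigroup_def)

lemma complete_trajectoryD: "complete_trajectory S \<xi> \<Longrightarrow> t \<ge> 0 \<Longrightarrow> S t (\<xi> s) = \<xi> (t + s)"
  by (simp add: complete_trajectory_def)

lemma complete_trajectory_shift: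
  "complete_trajectory S \<xi> \<Longrightarrow> complete_trajectory S (\<lambda>s. \<xi> (s + c))"
  by (simp add: complete_trajectory_def add.assoc)

lemma J_setI: "complete_trajectory S \<xi> \<Longrightarrow> bounded (\<xi> ` {..0}) \<Longrightarrow> \<xi> 0 \<in> J_set S"
  unfolding J_set_def by blast

lemma J_setE:
  assumes "x \<in> J_set S"
  obtains \<xi> where "x = \<xi> 0" "complete_trajectory S \<xi>" "bounded (\<xi> ` {..0})"
  using assms unfolding J_set_def by blast

lemma I_setI: "complete_trajectory S \<xi> \<Longrightarrow> bounded (range \<xi>) \<Longrightarrow> \<xi> 0 \<in> I_set S"
  unfolding I_set_def by blast

lemma I_set_subset_J_set: "I_set S \<subseteq> J_set S"
proof
  fix x assume "x \<in> I_set S"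
  then obtain \<xi> where "x = \<xi> 0" "complete_trajectory S \<xi>" "bounded (range \<xi>)"
    unfolding I_set_def by blast
  then show "x \<in> J_set S"
    using J_setI bounded_subset[of "range \<xi>" "\<xi> ` {..0}"] by blast
qed

lemma image_J_set_subset:
  assumes orbit_cont: "\<And>x. continuous_on {0..} (\<lambda>t. S t x)" and "t \<ge> 0"
  shows "S t ` J_set S \<subseteq> J_set S"
proof
  fix y assume "y \<in> S t ` J_set S"
  then obtain \<xi> where y: "y = S t (\<xi> 0)" and \<xi>: "complete_trajectory S \<xi>" "bounded (\<xi> ` {..0})"
    by (auto elim: J_setE)
  define \<eta> where "\<eta> = (\<lambda>s. \<xi> (s + t))"
  have "compact ((\<lambda>r. S r (\<xi> 0)) ` {0..t})"
    by (intro compact_continuous_image continuous_on_subset[OF orbit_cont]) auto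
  then have bounded_arc: "bounded ((\<lambda>r. S r (\<xi> 0)) ` {0..t})"
    by (rule compact_imp_bounded)
  have "\<eta> ` {..0} \<subseteq> \<xi> ` {..0} \<union> (\<lambda>r. S r (\<xi> 0)) ` {0..t}"
  proof
    fix z assume "z \<in> \<eta> ` {..0}"
    then obtain s where "s \<le> 0" "z = \<xi> (s + t)" unfolding \<eta>_def by auto
    moreover have "\<xi> (s + t) = S (s + t) (\<xi> 0)" if "s + t \<ge> 0"
      using complete_trajectoryD[OF \<xi>(1) that, of 0] by simp
    ultimately show "z \<in> \<xi> ` {..0} \<union> (\<lambda>r. S r (\<xi> 0)) ` {0..t}"
      by (cases "s + t \<le> 0") auto
  qed
  then have "bounded (\<eta> ` {..0})"
    using bounded_Un bounded_subset bounded_arc \<xi>(2) by blast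
  moreover have "\<eta> 0 = y"
    using complete_trajectoryD[OF \<xi>(1) \<open>t \<ge> 0\<close>, of 0] y by (simp add: \<eta>_def)
  moreover have "complete_trajectory S \<eta>"
    unfolding \<eta>_def by (rule complete_trajectory_shift[OF \<xi>(1)])
  ultimately show "y \<in> J_set S"
    using J_setI by metis
qed

lemma J_set_subset_image:
  assumes "t \<ge> 0"
  shows "J_set S \<subseteq> S t ` J_set S"
proof
  fix x assume "x \<in> J_set S"
  then obtain \<xi> where x: "x = \<xi> 0" and \<xi>: "complete_trajectory S \<xi>" "bounded (\<xi> ` {..0})"
    by (rule J_setE)
  define \<eta> where "\<eta> = (\<lambda>s. \<xi> (s - t))"
  have "complete_trajectory S \<eta>"
    unfolding \<eta>_def diff_conv_add_uminus by (rule complete_trajectory_shift[OF \<xi>(1)])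
  moreover have "bounded (\<eta> ` {..0})"
    by (rule bounded_subset[OF \<xi>(2)]) (use assms in \<open>auto simp: \<eta>_def\<close>)
  ultimately have "\<eta> 0 \<in> J_set S"
    by (rule J_setI)
  moreover have "S t (\<eta> 0) = x"
    using complete_trajectoryD[OF \<xi>(1) assms] x by (simp add: \<eta>_def)
  ultimately show "x \<in> S t ` J_set S" by blast
qed

lemma invariant_J_set:
  assumes "\<And>x. continuous_on {0..} (\<lambda>t. S t x)"
  shows "invariant_set S (J_set S)"
  unfolding invariant_set_def
  by (intro allI impI equalityI image_J_set_subset[OF assms] J_set_subset_image)

lemma Inf_dist_le_semidist: "a \<in> A \<Longrightarrow> Inf ((\<lambda>b. ereal (dist a b)) ` B) \<le> semidist A B"
  unfolding semidist_def by (intro Sup_upper) auto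

lemma closed_Inf_dist_nonpos_imp_mem:
  assumes "closed D" and "Inf ((\<lambda>b. ereal (dist x b)) ` D) \<le> 0"
  shows "x \<in> D"
proof (rule closed_approachable[OF \<open>closed D\<close>, THEN iffD1], intro allI impI)
  fix e :: real assume "e > 0"
  with assms(2) have "Inf ((\<lambda>b. ereal (dist x b)) ` D) < ereal e"
    by (simp add: le_less_trans)
  then obtain b where "b \<in> D" "dist x b < e"
    unfolding Inf_less_iff by auto
  then show "\<exists>y\<in>D. dist y x < e" by (auto simp: dist_commute)
qed

lemma J_set_subset_attractor:
  assumes "closed D"
    and attracts: "\<And>B. bounded B \<Longrightarrow> ((\<lambda>t. semidist (S t ` B) D) \<longlongrightarrow> 0) at_top"
  shows "J_set S \<subseteq> D"
proof
  fix x assume "x \<in> J_set S"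
  then obtain \<xi> where x: "x = \<xi> 0" and \<xi>: "complete_trajectory S \<xi>" "bounded (\<xi> ` {..0})"
    by (rule J_setE)
  have mem: "x \<in> S t ` \<xi> ` {..0}" if "t \<ge> 0" for t
  proof -
    have "x = S t (\<xi> (- t))"
      using complete_trajectoryD[OF \<xi>(1) that, of "- t"] x by simp
    with that show ?thesis by auto
  qed
  have "\<forall>\<^sub>F t in at_top. Inf ((\<lambda>b. ereal (dist x b)) ` D) \<le> semidist (S t ` \<xi> ` {..0}) D"
    by (rule eventually_mono[OF eventually_ge_at_top[of 0]]) (rule Inf_dist_le_semidist[OF mem])
  then have "Inf ((\<lambda>b. ereal (dist x b)) ` D) \<le> 0"
    by (intro tendsto_lowerbound[OF attracts[OF \<xi>(2)]]) simp_all
  with \<open>closed D\<close> show "x \<in> D"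
    by (rule closed_Inf_dist_nonpos_imp_mem)
qed

lemma backward_orbit_exists:
  assumes "A \<subseteq> f ` A" and "x \<in> A"
  obtains xs where "xs 0 = x" "\<And>n. xs n \<in> A" "\<And>n. f (xs (Suc n)) = xs n"
proof -
  define g where "g = (\<lambda>y. SOME z. z \<in> A \<and> f z = y)"
  have g: "g y \<in> A \<and> f (g y) = y" if "y \<in> A" for y
    unfolding g_def by (rule someI_ex) (use assms(1) that in blast)
  define xs where "xs = (\<lambda>n. (g ^^ n) x)"
  have xs_in: "xs n \<in> A" for n
    by (induction n) (auto simp: xs_def g \<open>x \<in> A\<close>)
  have "f (xs (Suc n)) = xs n" for n
    using g[OF xs_in[of n]] by (simp add: xs_def)
  then show thesis
    using that[of xs] xs_in by (simp add: xs_def)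
qed

lemma backward_orbit_consistent:
  assumes "semigroup S" and orbit: "\<And>n. S 1 (xs (Suc n)) = xs n"
    and "s + real n \<ge> 0" and "n \<le> m"
  shows "S (s + real m) (xs m) = S (s + real n) (xs n)"
  using \<open>n \<le> m\<close>
proof (induction m rule: dec_induct)
  case (step m)
  have "S (s + real (Suc m)) (xs (Suc m)) = S ((s + real m) + 1) (xs (Suc m))"
    by (simp add: algebra_simps)
  also have "\<dots> = S (s + real m) (xs m)"
    using semigroup_add[OF \<open>semigroup S\<close>, of "s + real m" 1] step.hyps assms(3) orbit by simp
  finally show ?case using step.IH by simp
qed simp

text \<open>At time \<open>s\<close> the trajectory starts from the orbit point \<open>x\<^sub>N\<close> with \<open>N = \<lceil>-s\<rceil>\<close>,
so that the elapsed time \<open>s + N\<close> is nonnegative.\<close>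

lemma complete_trajectory_through_backward_orbit:
  assumes "semigroup S" and orbit: "\<And>n. S 1 (xs (Suc n)) = xs n"
  obtains \<xi> where "complete_trajectory S \<xi>" "\<xi> 0 = xs 0" "\<And>s. \<exists>t\<ge>0. \<exists>n. \<xi> s = S t (xs n)"
proof -
  define N where "N = (\<lambda>s::real. nat \<lceil>- s\<rceil>)"
  have N: "s + real (N s) \<ge> 0" for s unfolding N_def by linarith
  define \<xi> where "\<xi> = (\<lambda>s. S (s + real (N s)) (xs (N s)))"
  have "S t (\<xi> s) = \<xi> (t + s)" if "t \<ge> 0" for t s
  proof -
    have "N (t + s) \<le> N s" unfolding N_def using that by (intro nat_mono ceiling_mono) simp
    have "S t (\<xi> s) = S ((t + s) + real (N s)) (xs (N s))"
      unfolding \<xi>_def using semigroup_add[OF \<open>semigroup S\<close> that N] by (simp add: add.assoc)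
    also have "\<dots> = \<xi> (t + s)"
      unfolding \<xi>_def
      by (rule backward_orbit_consistent[where xs=xs, OF \<open>semigroup S\<close> orbit N[of "t + s"]]) fact
    finally show ?thesis .
  qed
  then have "complete_trajectory S \<xi>" by (simp add: complete_trajectory_def)
  moreover have "\<xi> 0 = xs 0" using \<open>semigroup S\<close> by (simp add: \<xi>_def N_def)
  moreover have "\<exists>t\<ge>0. \<exists>n. \<xi> s = S t (xs n)" for s using N \<xi>_def by blast
  ultimately show thesis by (rule that)
qed

lemma bounded_invariant_subset_I_set:
  assumes "semigroup S" and "bounded A" and "invariant_set S A"
  shows "A \<subseteq> I_set S"
proof
  fix x assume "x \<in> A"
  have forward: "S t ` A = A" if "t \<ge> 0" for t
    using \<open>invariant_set S A\<close> that by (simp add: invariant_set_def)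
  obtain xs where xs: "xs 0 = x" "\<And>n. xs n \<in> A" "\<And>n. S 1 (xs (Suc n)) = xs n"
    using backward_orbit_exists[of A "S 1" x] forward[of 1] \<open>x \<in> A\<close> by auto
  obtain \<xi> where \<xi>: "complete_trajectory S \<xi>" "\<xi> 0 = x" "\<And>s. \<exists>t\<ge>0. \<exists>n. \<xi> s = S t (xs n)"
    using complete_trajectory_through_backward_orbit[where xs=xs, OF \<open>semigroup S\<close> xs(3)] xs(1)
    by metis
  have "range \<xi> \<subseteq> A"
    using \<xi>(3) forward xs(2) by blast
  then have "bounded (range \<xi>)"
    using \<open>bounded A\<close> bounded_subset by blast
  with \<xi>(1,2) show "x \<in> I_set S"
    using I_setI by metis
qed

theorem mainTheorem8:
  fixes S :: "real \<Rightarrow> 'a::{real_inner, complete_space} \<Rightarrow> 'a"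
  assumes "continuous_semigroup S"
  shows "invariant_set S (J_set S)
    \<and> (\<forall>D. closed D \<and> (\<forall>B. bounded B \<longrightarrow> ((\<lambda>t. semidist (S t ` B) D) \<longlongrightarrow> 0) at_top)
            \<longrightarrow> J_set S \<subseteq> D)
    \<and> (\<forall>A. A \<noteq> {} \<and> bounded A \<and> invariant_set S A
            \<longrightarrow> A \<subseteq> I_set S \<and> I_set S \<subseteq> J_set S \<and> J_set S \<noteq> {})"
proof (intro conjI allI impI)
  have sg: "semigroup S" and orbit_cont: "\<And>x. continuous_on {0..} (\<lambda>t. S t x)"
    using assms by (simp_all add: continuous_semigroup_def)
  show "invariant_set S (J_set S)"
    by (rule invariant_J_set[OF orbit_cont])
  show "J_set S \<subseteq> D"
    if "closed D \<and> (\<forall>B. bounded B \<longrightarrow> ((\<lambda>t. semidist (S t ` B) D) \<longlongrightarrow> 0) at_top)" for D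
    using that J_set_subset_attractor[of D S] by blast
  fix A assume A: "A \<noteq> {} \<and> bounded A \<and> invariant_set S A"
  then show "A \<subseteq> I_set S"
    using bounded_invariant_subset_I_set[OF sg] by blast
  show "I_set S \<subseteq> J_set S"
    by (rule I_set_subset_J_set)
  show "J_set S \<noteq> {}"
    using A bounded_invariant_subset_I_set[OF sg] I_set_subset_J_set by blast
qed

end
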